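(* Consider the exponential-push content-access game described in the context, with $\lambda_{ps}(G)>\lambda_{ps}(B)>0$, $\pi_B=1-\pi_G>0$, and a common threshold $0\le\alpha<N$ of the other users. Let $\beta_1^*(\alpha)$ denote a maximizer of $U(\alpha,\beta)$ over $\beta\in[0,\alpha]$. Then: (i) if $\frac{\pi_G}{\pi_B} < \frac{\lambda_{ps}(G)}{\lambda_{ps}(B)}$, then $\beta^*_1(\alpha)=\alpha$; (ii) if $\frac{\pi_G}{\pi_B} > \frac{\lambda_{ps}(G)}{\lambda_{ps}(B)}$, then $\beta^*_1(\alpha)=0$; (iii) if $\frac{\pi_G}{\pi_B} = \frac{\lambda_{ps}(G)}{\lambda_{ps}(B)}$, then every $\beta\in[0,\alpha]$ is optimal.
   Context: A content has a type $\theta\in\{G,B\}$ (good/bad) and lifetime $\tau>0$; users believe it is good with probability $\pi_G$ and bad with probability $\pi_B=1-\pi_G$. Users use threshold strategies on the viewcount: all users other than a tagged user access the content once the viewcount reaches $\alpha$; the tagged user uses threshold $\beta$. Exponential push dynamics with $N>0$ potential push users: for type $\theta$ with push rate $\lambda_{ps}(\theta)>0$ and pull rate $\lambda_{pu}>0$, let $t_\alpha(\theta)=-\frac{1}{\lambda_{ps}(\theta)}\log(1-\alpha/N)$, and the viewcount is $X(t,\theta)=N(1-e^{-\lambda_{ps}(\theta)t})$ for $0\le t\le t_\alpha(\theta)$ and $X(t,\theta)=N(1-e^{-\lambda_{ps}(\theta)t})+\lambda_{pu}(t-t_\alpha(\theta))$ for $t\ge t_\alpha(\theta)$. For $\beta\ge0$,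 $t_\beta(\theta)=\min\{t\ge0: X(t,\theta)=\beta\}$. The tagged user's utility is $U(\alpha,\beta)=\pi_G(\tau-t_\beta(G))-\pi_B(\tau-t_\beta(B))$. *)

theory Defs
  imports Complex_Main
begin

datatype ctype = G | B

definition t_thr :: "real \<Rightarrow> (ctype \<Rightarrow> real) \<Rightarrow> real \<Rightarrow> ctype \<Rightarrow> real" where
  "t_thr N lps a \<theta> = - (1 / lps \<theta>) * ln (1 - a / N)"

definition viewcount :: "real \<Rightarrow> (ctype \<Rightarrow> real) \<Rightarrow> real \<Rightarrow> real \<Rightarrow> ctype \<Rightarrow> real \<Rightarrow> real" where
  "viewcount N lps lpu \<alpha> \<theta> t =
     (if t \<le> t_thr N lps \<alpha> \<theta> then N * (1 - exp (- lps \<theta> * t))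
      else N * (1 - exp (- lps \<theta> * t)) + lpu * (t - t_thr N lps \<alpha> \<theta>))"

definition t_beta :: "real \<Rightarrow> (ctype \<Rightarrow> real) \<Rightarrow> real \<Rightarrow> real \<Rightarrow> real \<Rightarrow> ctype \<Rightarrow> real" where
  "t_beta N lps lpu \<alpha> \<beta> \<theta> = Inf {t. 0 \<le> t \<and> viewcount N lps lpu \<alpha> \<theta> t = \<beta>}"

definition utility :: "real \<Rightarrow> (ctype \<Rightarrow> real) \<Rightarrow> real \<Rightarrow> real \<Rightarrow> real \<Rightarrow> real \<Rightarrow> real \<Rightarrow> real" where
  "utility N lps lpu \<tau> \<pi>G \<alpha> \<beta> =
     \<pi>G * (\<tau> - t_beta N lps lpu \<alpha> \<beta> G) - (1 - \<pi>G) * (\<tau> - t_beta N lps lpu \<alpha> \<beta> B)"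

definition is_opt :: "real \<Rightarrow> (ctype \<Rightarrow> real) \<Rightarrow> real \<Rightarrow> real \<Rightarrow> real \<Rightarrow> real \<Rightarrow> real \<Rightarrow> bool" where
  "is_opt N lps lpu \<tau> \<pi>G \<alpha> \<beta> \<longleftrightarrow>
     \<beta> \<in> {0..\<alpha>} \<and> (\<forall>b\<in>{0..\<alpha>}. utility N lps lpu \<tau> \<pi>G \<alpha> b \<le> utility N lps lpu \<tau> \<pi>G \<alpha> \<beta>)"

end

theory Submission
  imports Defs
begin

text \<open>Since \<open>\<beta> \<le> \<alpha>\<close>, the viewcount reaches \<open>\<beta>\<close> while it is still driven by pushes alone, so
  \<open>t\<^sub>\<beta>(\<theta>) = -ln(1 - \<beta>/N) / \<lambda>\<^sub>p\<^sub>s(\<theta>)\<close> for both types. Hence \<open>U(\<alpha>, \<beta>)\<close> is a constant plus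
  \<open>-ln(1 - \<beta>/N)\<close>, a strictly increasing function of \<open>\<beta>\<close>, times
  \<open>(\<pi>\<^sub>B \<lambda>\<^sub>p\<^sub>s(G) - \<pi>\<^sub>G \<lambda>\<^sub>p\<^sub>s(B)) / (\<lambda>\<^sub>p\<^sub>s(G) \<lambda>\<^sub>p\<^sub>s(B))\<close>, whose sign is that of
  \<open>\<lambda>\<^sub>p\<^sub>s(G)/\<lambda>\<^sub>p\<^sub>s(B) - \<pi>\<^sub>G/\<pi>\<^sub>B\<close>: the maximiser sits at the right end, the left end, or anywhere.\<close>

lemma maximizer_of_scaled_strict_mono_pos:
  fixes g :: "real \<Rightarrow> real"
  assumes "strict_mono_on S g" and "0 < c" and "x \<in> S" and "y \<in> S"
    and "\<forall>z\<in>S. c * g z \<le> c * g x"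
  shows "y \<le> x"
proof (rule ccontr)
  assume "\<not> y \<le> x"
  then have "g x < g y" using assms(1,3,4) by (simp add: strict_mono_onD)
  then have "c * g x < c * g y" using \<open>0 < c\<close> by simp
  then show False using assms(4,5) by fastforce
qed

lemma maximizer_of_scaled_strict_mono_neg:
  fixes g :: "real \<Rightarrow> real"
  assumes "strict_mono_on S g" and "c < 0" and "x \<in> S" and "y \<in> S"
    and "\<forall>z\<in>S. c * g z \<le> c * g x"
  shows "x \<le> y"
proof (rule ccontr)
  assume "\<not> x \<le> y"
  then have "g y < g x" using assms(1,3,4) by (simp add: strict_mono_onD)
  then have "c * g x < c * g y" using \<open>c < 0\<close> by simp
  then show False using assms(4,5) by fastforce
qed

lemma strict_mono_on_neg_ln_one_minus_divide:
  fixes N :: real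
  assumes "N > 0"
  shows "strict_mono_on {..<N} (\<lambda>b. - ln (1 - b / N))"
proof (rule strict_mono_onI)
  fix r s assume "r \<in> {..<N}" "s \<in> {..<N}" "r < s"
  then have "0 < 1 - s / N" "1 - s / N < 1 - r / N"
    using assms by (simp_all add: field_simps)
  then show "- ln (1 - r / N) < - ln (1 - s / N)" by simp
qed

lemma viewcount_gt_threshold_after_t_thr:
  assumes "N > 0" and "lpu > 0" and "lps \<theta> > 0" and "\<alpha> < N"
    and "t > t_thr N lps \<alpha> \<theta>"
  shows "viewcount N lps lpu \<alpha> \<theta> t > \<alpha>"
proof -
  let ?ta = "t_thr N lps \<alpha> \<theta>"
  have "exp (- lps \<theta> * ?ta) = 1 - \<alpha> / N"
    using assms(1,3,4) by (simp add: t_thr_def field_simps)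
  moreover have "N * exp (- lps \<theta> * t) < N * exp (- lps \<theta> * ?ta)"
    using assms(1,3,5) by simp
  ultimately have "N * (1 - exp (- lps \<theta> * t)) > \<alpha>"
    using assms(1) by (simp add: right_diff_distrib)
  moreover have "lpu * (t - ?ta) > 0" using assms(2,5) by simp
  ultimately show ?thesis using assms(5) by (simp add: viewcount_def)
qed

lemma t_beta_below_threshold:
  assumes "N > 0" and "lpu > 0" and "lps \<theta> > 0"
    and "0 \<le> \<beta>" and "\<beta> \<le> \<alpha>" and "\<alpha> < N"
  shows "t_beta N lps lpu \<alpha> \<beta> \<theta> = - ln (1 - \<beta> / N) / lps \<theta>"
proof -
  define t\<^sub>0 where "t\<^sub>0 = - ln (1 - \<beta> / N) / lps \<theta>"
  have pos_\<beta>: "0 < 1 - \<beta> / N" and le_\<beta>: "1 - \<alpha> / N \<le> 1 - \<beta> / N"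
    using assms(1,5,6) by (simp_all add: field_simps)
  have exp_t\<^sub>0: "exp (- lps \<theta> * t\<^sub>0) = 1 - \<beta> / N"
    using pos_\<beta> assms(3) by (simp add: t\<^sub>0_def)
  have "0 \<le> t\<^sub>0"
    using pos_\<beta> assms(1,3,4) by (simp add: t\<^sub>0_def divide_nonpos_pos)
  moreover have t\<^sub>0_le: "t\<^sub>0 \<le> t_thr N lps \<alpha> \<theta>"
  proof -
    have "ln (1 - \<alpha> / N) \<le> ln (1 - \<beta> / N)"
      using le_\<beta> assms(1,6) by (simp add: field_simps)
    then show ?thesis using assms(3) by (simp add: t\<^sub>0_def t_thr_def divide_right_mono)
  qed
  moreover have "viewcount N lps lpu \<alpha> \<theta> t\<^sub>0 = \<beta>"
    using t\<^sub>0_le exp_t\<^sub>0 assms(1) by (simp add: viewcount_def field_simps)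
  moreover have "t = t\<^sub>0" if "viewcount N lps lpu \<alpha> \<theta> t = \<beta>" for t
  proof -
    have "t \<le> t_thr N lps \<alpha> \<theta>"
      using viewcount_gt_threshold_after_t_thr[of N lpu lps \<theta> \<alpha> t] assms that by force
    then have "exp (- lps \<theta> * t) = 1 - \<beta> / N"
      using that assms(1) by (simp add: viewcount_def field_simps)
    then have "- lps \<theta> * t = - lps \<theta> * t\<^sub>0" using exp_t\<^sub>0 exp_inj_iff by metis
    then show "t = t\<^sub>0" using assms(3) by simp
  qed
  ultimately have "{t. 0 \<le> t \<and> viewcount N lps lpu \<alpha> \<theta> t = \<beta>} = {t\<^sub>0}" by blast
  then show ?thesis by (simp add: t_beta_def t\<^sub>0_def)
qed

lemma utility_below_threshold:
  assumes "N > 0" and "lpu > 0" and "lps G > 0" and "lps B > 0"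
    and "0 \<le> \<beta>" and "\<beta> \<le> \<alpha>" and "\<alpha> < N"
  shows "utility N lps lpu \<tau> \<pi>G \<alpha> \<beta> = (2 * \<pi>G - 1) * \<tau>
     + ((1 - \<pi>G) * lps G - \<pi>G * lps B) / (lps G * lps B) * - ln (1 - \<beta> / N)"
  using assms(3,4)
  by (simp add: utility_def t_beta_below_threshold[OF assms(1,2) _ assms(5-7)] field_simps)

lemma odds_vs_rate_ratio_sign:
  fixes p a b :: real
  assumes "a > 0" and "b > 0" and "1 - p > 0"
  shows "p / (1 - p) < a / b \<longleftrightarrow> ((1 - p) * a - p * b) / (a * b) > 0"
    and "p / (1 - p) > a / b \<longleftrightarrow> ((1 - p) * a - p * b) / (a * b) < 0"
    and "p / (1 - p) = a / b \<longleftrightarrow> ((1 - p) * a - p * b) / (a * b) = 0"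
  using assms by (auto simp: divide_simps algebra_simps)

theorem lemma2:
  fixes N lpu \<tau> \<pi>G \<alpha> :: real and lps :: "ctype \<Rightarrow> real"
  assumes "N > 0" and "lpu > 0" and "\<tau> > 0"
    and "lps G > lps B" and "lps B > 0"
    and "0 \<le> \<pi>G" and "1 - \<pi>G > 0"
    and "0 \<le> \<alpha>" and "\<alpha> < N"
  shows "(\<pi>G / (1 - \<pi>G) < lps G / lps B \<longrightarrow>
            (\<forall>\<beta>. is_opt N lps lpu \<tau> \<pi>G \<alpha> \<beta> \<longrightarrow> \<beta> = \<alpha>))
       \<and> (\<pi>G / (1 - \<pi>G) > lps G / lps B \<longrightarrow>
            (\<forall>\<beta>. is_opt N lps lpu \<tau> \<pi>G \<alpha> \<beta> \<longrightarrow> \<beta> = 0))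
       \<and> (\<pi>G / (1 - \<pi>G) = lps G / lps B \<longrightarrow>
            (\<forall>\<beta>\<in>{0..\<alpha>}. is_opt N lps lpu \<tau> \<pi>G \<alpha> \<beta>))"
proof -
  define c where "c = ((1 - \<pi>G) * lps G - \<pi>G * lps B) / (lps G * lps B)"
  have "lps G > 0" using assms(4,5) by simp
  then have U: "\<And>b. b \<in> {0..\<alpha>} \<Longrightarrow>
      utility N lps lpu \<tau> \<pi>G \<alpha> b = (2 * \<pi>G - 1) * \<tau> + c * - ln (1 - b / N)"
    using utility_below_threshold assms(1,2,5,9) by (simp add: c_def)
  have mono: "strict_mono_on {0..\<alpha>} (\<lambda>b. - ln (1 - b / N))"
    by (rule monotone_on_subset[OF strict_mono_on_neg_ln_one_minus_divide[OF assms(1)]])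
      (use assms(9) in auto)
  have opt_iff: "is_opt N lps lpu \<tau> \<pi>G \<alpha> \<beta> \<longleftrightarrow> \<beta> \<in> {0..\<alpha>} \<and>
      (\<forall>b\<in>{0..\<alpha>}. c * - ln (1 - b / N) \<le> c * - ln (1 - \<beta> / N))" for \<beta>
    by (auto simp: is_opt_def U)
  have ends: "0 \<in> {0..\<alpha>}" "\<alpha> \<in> {0..\<alpha>}" using assms(8) by auto
  note sign = odds_vs_rate_ratio_sign[OF \<open>lps G > 0\<close> assms(5,7), folded c_def]
  show ?thesis
    using maximizer_of_scaled_strict_mono_pos[OF mono, of c _ \<alpha>]
      maximizer_of_scaled_strict_mono_neg[OF mono, of c _ 0] ends
    by (auto simp: sign opt_iff intro: order.antisym)
qed

end
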